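(* Let $L\ge1$, $M\ge2$, $\lambda>0$, $\tilde d_{\min}>0$, let ${\bm\kappa}_k=(\Phi_k,\Psi_k,\Theta_k)^T$ and ${\bm\kappa}_{k'}=(\Phi_{k'},\Psi_{k'},\Theta_{k'})^T$ be unit vectors in $\mathbb{R}^3$ with $\Delta\Phi_{k,k'}:=\Phi_k-\Phi_{k'}\neq0$, and let ${\bf q}_1,\dots,{\bf q}_L\in\mathbb{R}^3$ be arbitrary. For real antenna offsets $b_{l,m}$ ($1\le l\le L$, $1\le m\le M$) define $$\xi=\frac{1}{L^2M^2}\Big|\sum_{l=1}^L e^{\,\mathrm{j}\frac{2\pi}{\lambda}({\bm\kappa}_k-{\bm\kappa}_{k'})^T{\bf q}_l}\sum_{m=1}^M e^{\,\mathrm{j}\frac{2\pi}{\lambda}b_{l,m}\Delta\Phi_{k,k'}}\Big|^2.$$ Let $\tilde\nu_{\min}=\lceil M\tilde d_{\min}|\Delta\Phi_{k,k'}|/\lambda-1\rceil$, let $\zeta^\star=\tilde\nu_{\min}/M$ if $\mathrm{mod}(\tilde\nu_{\min}+1,M)\neq0$ and $\zeta^\star=(\tilde\nu_{\min}+1)/M$ otherwise, and set $$b_{l,m}=(m-1)\frac{(\zeta^\star+1/M)\lambda}{|\Delta\Phi_{k,k'}|}\quad\text{for all } l,m.$$ Then $\sum_{m=1}^M e^{\mathrm{j}\frac{2\pi}{\lambda}b_{l,m}\Delta\Phi_{k,k'}}=0$ for every $l$, hence $\xi=0$ regardless of ${\bf q}_1,\dots,{\bf q}_L$; moreover $b_{l,1}=0$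 and $|b_{l,m}-b_{l,m'}|\ge\tilde d_{\min}$ for all $l$ and all $m\neq m'$.
   Context: $\mathrm{j}$ is the imaginary unit, $\lceil\cdot\rceil$ the ceiling, and $\mathrm{mod}(a,b)$ the remainder of integer $a$ divided by $b$. Each of $L$ UAVs carries a linear movable-antenna array of $M$ antennas at offsets $b_{l,m}$ along the $x$-axis from the UAV's reference point ${\bf q}_l$; $\tilde d_{\min}$ is the minimum inter-antenna spacing (mutual-coupling avoidance). $\xi$ is the squared correlation coefficient of two users' far-field channels. *)

theory Defs
  imports "HOL-Analysis.Analysis"
begin

text \<open>Directions are vectors in R^3 with components (Phi, Psi, Theta) = (x $ 1, x $ 2, x $ 3).
  UAV l (1 \<le> l \<le> L) sits at q l; antenna m (1 \<le> m \<le> M) of UAV l has offset b l m.\<close>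
definition xi :: "nat \<Rightarrow> nat \<Rightarrow> real \<Rightarrow> real^3 \<Rightarrow> real^3 \<Rightarrow> (nat \<Rightarrow> real^3)
                   \<Rightarrow> (nat \<Rightarrow> nat \<Rightarrow> real) \<Rightarrow> real" where
  "xi L M lam kk kk' q b =
     (1 / (real L ^ 2 * real M ^ 2)) *
     (cmod (\<Sum>l=1..L. exp (\<i> * complex_of_real (2 * pi / lam * ((kk - kk') \<bullet> q l))) *
               (\<Sum>m=1..M. exp (\<i> * complex_of_real (2 * pi / lam * b l m * (kk $ 1 - kk' $ 1)))))) ^ 2"

definition nu_min :: "nat \<Rightarrow> real \<Rightarrow> real \<Rightarrow> real \<Rightarrow> int" where
  "nu_min M dmin lam dPhi = \<lceil>real M * dmin * \<bar>dPhi\<bar> / lam - 1\<rceil>"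

definition zeta_star :: "nat \<Rightarrow> real \<Rightarrow> real \<Rightarrow> real \<Rightarrow> real" where
  "zeta_star M dmin lam dPhi =
     (let \<nu> = nu_min M dmin lam dPhi in
      if (\<nu> + 1) mod int M \<noteq> 0 then real_of_int \<nu> / real M
      else real_of_int (\<nu> + 1) / real M)"

definition b_opt :: "nat \<Rightarrow> real \<Rightarrow> real \<Rightarrow> real \<Rightarrow> nat \<Rightarrow> nat \<Rightarrow> real" where
  "b_opt M dmin lam dPhi l m =
     (real m - 1) * ((zeta_star M dmin lam dPhi + 1 / real M) * lam / \<bar>dPhi\<bar>)"

end

theory Submission
  imports Defs
begin

text \<open>Writing \<open>N = M \<zeta>\<^sup>\<star> + 1\<close>, the offsets form the arithmetic progression \<open>(m - 1) N \<lambda> / (M |\<Delta>\<Phi>|)\<close>,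
  so the phases \<open>2\<pi> b\<^sub>l\<^sub>,\<^sub>m \<Delta>\<Phi> / \<lambda>\<close> run through the powers of the \<open>M\<close>-th root of unity
  \<open>exp (\<plusminus>2\<pi>\<i> N / M)\<close>. The choice of \<open>\<zeta>\<^sup>\<star>\<close> guarantees that \<open>M\<close> does not divide \<open>N\<close>, so this root is
  not \<open>1\<close> and the geometric sum vanishes; and \<open>N \<ge> \<nu>\<^sub>m\<^sub>i\<^sub>n + 1 \<ge> M d\<^sub>m\<^sub>i\<^sub>n |\<Delta>\<Phi>| / \<lambda>\<close>, so the step of the
  progression is at least \<open>d\<^sub>m\<^sub>i\<^sub>n\<close>.\<close>

lemma sum_powers_root_unity_eq_0:
  fixes z :: "'a::field"
  assumes "z ^ n = 1" and "z \<noteq> 1"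
  shows "(\<Sum>k<n. z ^ k) = 0"
  using assms by (simp add: geometric_sum)

lemma exp_2pi_rational_eq_1_iff:
  fixes M :: nat and K :: int
  assumes "M > 0"
  shows "exp (\<i> * complex_of_real (2 * pi * real_of_int K / real M)) = 1 \<longleftrightarrow> int M dvd K"
proof
  assume "exp (\<i> * complex_of_real (2 * pi * real_of_int K / real M)) = 1"
  then obtain n :: int where "2 * pi * real_of_int K / real M = 2 * pi * real_of_int n"
    by (auto simp: exp_eq_1)
  then have "real_of_int K = real_of_int (n * int M)"
    using assms by (simp add: field_simps)
  then show "int M dvd K"
    by (metis dvd_triv_right of_int_eq_iff)
next
  assume "int M dvd K"
  then obtain n where "K = int M * n" ..
  then have "\<i> * complex_of_real (2 * pi * real_of_int K / real M) = 2 * pi * \<i> * of_int n"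
    using assms by (simp add: field_simps)
  then show "exp (\<i> * complex_of_real (2 * pi * real_of_int K / real M)) = 1"
    by (simp add: exp_eq_1)
qed

lemma sum_exp_2pi_rational_eq_0:
  fixes M :: nat and K :: int
  assumes "M > 0" and "\<not> int M dvd K"
  shows "(\<Sum>k<M. exp (\<i> * complex_of_real (2 * pi * real k * real_of_int K / real M))) = 0"
proof -
  define z where "z = exp (\<i> * complex_of_real (2 * pi * real_of_int K / real M))"
  have power_z: "z ^ k = exp (\<i> * complex_of_real (2 * pi * real k * real_of_int K / real M))" for k
  proof -
    have "z ^ k = exp (of_nat k * (\<i> * complex_of_real (2 * pi * real_of_int K / real M)))"
      unfolding z_def by (metis exp_of_nat_mult)
    then show ?thesis by (simp add: mult_ac)
  qed
  have "z ^ M = 1"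
    using exp_2pi_rational_eq_1_iff[of M "int M * K"] assms(1)
    by (simp add: power_z)
  moreover have "z \<noteq> 1"
    using exp_2pi_rational_eq_1_iff[OF assms(1)] assms(2) by (simp add: z_def)
  ultimately have "(\<Sum>k<M. z ^ k) = 0"
    by (rule sum_powers_root_unity_eq_0)
  then show ?thesis
    by (simp only: power_z)
qed

lemma b_opt_arithmetic_progression:
  fixes M :: nat and dmin lam dPhi :: real
  assumes "M \<ge> 2" and "lam > 0" and "dPhi \<noteq> 0"
  obtains N :: int
  where "\<not> int M dvd N"
    and "real M * dmin * \<bar>dPhi\<bar> / lam \<le> real_of_int N"
    and "\<And>l m. b_opt M dmin lam dPhi l m = (real m - 1) * (real_of_int N * lam / (real M * \<bar>dPhi\<bar>))"
proof -
  define \<nu> where "\<nu> = nu_min M dmin lam dPhi"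
  have \<nu>_bound: "real M * dmin * \<bar>dPhi\<bar> / lam \<le> real_of_int \<nu> + 1"
    unfolding \<nu>_def nu_min_def by linarith
  have M_pos: "real M > 0"
    using assms(1) by simp
  obtain N :: int where N_zeta: "real_of_int N = real M * zeta_star M dmin lam dPhi + 1"
    and N_ndvd: "\<not> int M dvd N" and N_bound: "real_of_int \<nu> + 1 \<le> real_of_int N"
  proof (cases "(\<nu> + 1) mod int M = 0")
    case False
    then show ?thesis
      using M_pos by (intro that[of "\<nu> + 1"]) (auto simp: zeta_star_def \<nu>_def [symmetric])
  next
    case True
    \<comment> \<open>\<open>M \<ge> 2\<close> makes the residue of \<open>\<nu> + 2\<close> equal to \<open>1\<close> rather than \<open>0\<close>.\<close>
    have "(\<nu> + 2) mod int M = ((\<nu> + 1) mod int M + 1) mod int M"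
      by (simp add: mod_add_left_eq add.assoc)
    also have "\<dots> = 1"
      using True assms(1) by simp
    finally have "\<not> int M dvd (\<nu> + 2)"
      by (auto simp: dvd_eq_mod_eq_0)
    then show ?thesis
      using True M_pos by (intro that[of "\<nu> + 2"]) (auto simp: zeta_star_def \<nu>_def [symmetric])
  qed
  show ?thesis
  proof (rule that[OF N_ndvd])
    show "real M * dmin * \<bar>dPhi\<bar> / lam \<le> real_of_int N"
      using \<nu>_bound N_bound by linarith
    show "b_opt M dmin lam dPhi l m = (real m - 1) * (real_of_int N * lam / (real M * \<bar>dPhi\<bar>))" for l m
      unfolding b_opt_def N_zeta using M_pos assms(3) by (simp add: field_simps)
  qed
qed

lemma b_opt_phase_sum_eq_0:
  fixes M :: nat and dmin lam dPhi :: real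
  assumes "M \<ge> 2" and "lam > 0" and "dPhi \<noteq> 0"
  shows "(\<Sum>m=1..M. exp (\<i> * complex_of_real (2 * pi / lam * b_opt M dmin lam dPhi l m * dPhi))) = 0"
proof -
  obtain N where N_ndvd: "\<not> int M dvd N"
    and b_eq: "\<And>l m. b_opt M dmin lam dPhi l m = (real m - 1) * (real_of_int N * lam / (real M * \<bar>dPhi\<bar>))"
    using b_opt_arithmetic_progression[OF assms] by blast
  define s :: int where "s = (if dPhi > 0 then 1 else -1)"
  have sgn_dPhi: "dPhi / \<bar>dPhi\<bar> = real_of_int s"
    using assms(3) by (auto simp: s_def)
  have phase: "2 * pi / lam * b_opt M dmin lam dPhi l (Suc k) * dPhi
      = 2 * pi * real k * real_of_int (s * N) / real M" for k
  proof -
    have "2 * pi / lam * b_opt M dmin lam dPhi l (Suc k) * dPhi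
        = 2 * pi * real k * real_of_int N / real M * (dPhi / \<bar>dPhi\<bar>)"
      unfolding b_eq using assms by (simp add: field_simps)
    then show ?thesis
      by (simp add: sgn_dPhi)
  qed
  have sN_ndvd: "\<not> int M dvd s * N"
    using N_ndvd by (auto simp: s_def)
  have "(\<Sum>k<M. exp (\<i> * complex_of_real (2 * pi * real k * real_of_int (s * N) / real M))) = 0"
    by (rule sum_exp_2pi_rational_eq_0[OF _ sN_ndvd]) (use assms(1) in simp)
  then show ?thesis
    by (simp only: One_nat_def sum.atLeast1_atMost_eq phase)
qed

lemma b_opt_spacing:
  fixes M :: nat and dmin lam dPhi :: real
  assumes "M \<ge> 2" and "lam > 0" and "dPhi \<noteq> 0" and "dmin > 0" and "m \<noteq> m'"
  shows "dmin \<le> \<bar>b_opt M dmin lam dPhi l m - b_opt M dmin lam dPhi l m'\<bar>"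
proof -
  obtain N where N_bound: "real M * dmin * \<bar>dPhi\<bar> / lam \<le> real_of_int N"
    and b_eq: "\<And>l m. b_opt M dmin lam dPhi l m = (real m - 1) * (real_of_int N * lam / (real M * \<bar>dPhi\<bar>))"
    using b_opt_arithmetic_progression[OF assms(1-3)] by blast
  define c where "c = real_of_int N * lam / (real M * \<bar>dPhi\<bar>)"
  have "dmin = real M * dmin * \<bar>dPhi\<bar> / lam * lam / (real M * \<bar>dPhi\<bar>)"
    using assms by (simp add: field_simps)
  also have "\<dots> \<le> c"
    unfolding c_def using N_bound assms
    by (intro divide_right_mono mult_right_mono) auto
  finally have dmin_le_c: "dmin \<le> c" .
  have "\<bar>b_opt M dmin lam dPhi l m - b_opt M dmin lam dPhi l m'\<bar> = \<bar>real m - real m'\<bar> * c"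
    using dmin_le_c assms(4) by (simp add: b_eq c_def [symmetric] abs_mult left_diff_distrib [symmetric])
  moreover have "1 \<le> \<bar>real m - real m'\<bar>"
    using assms(5) by linarith
  ultimately show ?thesis
    using dmin_le_c assms(4) by (metis mult_le_cancel_right1 order.trans less_le_not_le)
qed

theorem mainTheorem3:
  fixes L M :: nat and lam dmin :: real and kk kk' :: "real^3"
    and q :: "nat \<Rightarrow> real^3"
  assumes "L \<ge> 1" and "M \<ge> 2" and "lam > 0" and "dmin > 0"
    and "norm kk = 1" and "norm kk' = 1" and "kk $ 1 - kk' $ 1 \<noteq> 0"
  defines "b \<equiv> b_opt M dmin lam (kk $ 1 - kk' $ 1)"
  shows "(\<forall>l\<in>{1..L}. (\<Sum>m=1..M. exp (\<i> * complex_of_real (2 * pi / lam * b l m * (kk $ 1 - kk' $ 1)))) = 0)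
       \<and> xi L M lam kk kk' q b = 0
       \<and> (\<forall>l\<in>{1..L}. b l 1 = 0)
       \<and> (\<forall>l\<in>{1..L}. \<forall>m\<in>{1..M}. \<forall>m'\<in>{1..M}. m \<noteq> m' \<longrightarrow> \<bar>b l m - b l m'\<bar> \<ge> dmin)"
proof -
  have phase_sum: "(\<Sum>m=1..M. exp (\<i> * complex_of_real (2 * pi / lam * b l m * (kk $ 1 - kk' $ 1)))) = 0" for l
    unfolding b_def using b_opt_phase_sum_eq_0 assms(2,3,7) .
  have "xi L M lam kk kk' q b = 0"
    unfolding xi_def by (simp only: phase_sum mult_zero_right sum.neutral_const) simp
  moreover have "b l 1 = 0" for l
    by (simp add: b_def b_opt_def)
  moreover have "\<bar>b l m - b l m'\<bar> \<ge> dmin" if "m \<noteq> m'" for l m m'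
    unfolding b_def using assms(2,3,7,4) that by (rule b_opt_spacing)
  ultimately show ?thesis
    using phase_sum by blast
qed

end
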